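(* Let $\mathcal{F}\subseteq\mathcal{O}$ be a normal family of objects and let $(M_p)_{p\in\mathcal{F}}$ be the Voronoi partition of $V(G)$ with respect to $\mathcal{F}$. Then for every $p\in\mathcal{F}$ and every $v\in M_p$, the unique shortest path from $v$ to $\mathrm{loc}(p)$ is entirely contained in $M_p$. In particular, $G[M_p]$ is connected.
   Context: $G$ is a connected graph with positive edge weights; $\mathrm{dist}(X,Y)$ denotes the minimum weight of a path between a vertex of $X$ and a vertex of $Y$. Each object $p\in\mathcal{O}$ has a location $\mathrm{loc}(p)$, a nonempty vertex set inducing a connected subgraph, and a radius $\mathrm{rad}(p)\ge 0$. A family $\mathcal{F}$ is normal if locations of its members are pairwise disjoint and $\mathrm{dist}(\mathrm{loc}(p_1),\mathrm{loc}(p_2))>\mathrm{rad}(p_1)-\mathrm{rad}(p_2)$ for all ordered pairs of distinct $p_1,p_2\in\mathcal{F}$. Standing assumption: all values $\mathrm{dist}(u,v)$ and $\mathrm{dist}(u,v)-\mathrm{rad}(p)$ ($u,v\in V(G)$, $p\in\mathcal{O}$) are pairwise different and shortest paths between vertices are unique. The Voronoi partition assigns $v\in V(G)$ to $M_{p_0}$ iff $\mathrm{dist}(v,\mathrm{loc}(p_0))-\mathrm{rad}(p_0)$ is the smallest among the values $\mathrm{dist}(v,\mathrm{loc}(p))-\mathrm{rad}(p)$, $p\in\mathcal{F}$. The shortest path from $v$ to $\mathrm{loc}(p)$ is the minimum-weight path from $v$ to a vertex of $\mathrm{loc}(p)$. *)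

theory Defs
  imports Complex_Main
begin

definition wgraph :: "'v set \<Rightarrow> ('v \<times> 'v) set \<Rightarrow> ('v \<Rightarrow> 'v \<Rightarrow> real) \<Rightarrow> bool" where
  "wgraph V E w \<longleftrightarrow> finite V \<and> E \<subseteq> V \<times> V \<and>
     (\<forall>u v. (u, v) \<in> E \<longrightarrow> (v, u) \<in> E \<and> u \<noteq> v \<and> w u v > 0 \<and> w u v = w v u)"

definition is_walk :: "'v set \<Rightarrow> ('v \<times> 'v) set \<Rightarrow> 'v list \<Rightarrow> bool" where
  "is_walk V E P \<longleftrightarrow> P \<noteq> [] \<and> set P \<subseteq> V \<and> (\<forall>i. Suc i < length P \<longrightarrow> (P ! i, P ! Suc i) \<in> E)"

definition walk_weight :: "('v \<Rightarrow> 'v \<Rightarrow> real) \<Rightarrow> 'v list \<Rightarrow> real" where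
  "walk_weight w P = (\<Sum>i<length P - 1. w (P ! i) (P ! Suc i))"

definition walks_between :: "'v set \<Rightarrow> ('v \<times> 'v) set \<Rightarrow> 'v set \<Rightarrow> 'v set \<Rightarrow> 'v list set" where
  "walks_between V E X Y = {P. is_walk V E P \<and> hd P \<in> X \<and> last P \<in> Y}"

definition set_dist :: "'v set \<Rightarrow> ('v \<times> 'v) set \<Rightarrow> ('v \<Rightarrow> 'v \<Rightarrow> real) \<Rightarrow> 'v set \<Rightarrow> 'v set \<Rightarrow> real" where
  "set_dist V E w X Y = Inf (walk_weight w ` walks_between V E X Y)"

abbreviation vdist :: "'v set \<Rightarrow> ('v \<times> 'v) set \<Rightarrow> ('v \<Rightarrow> 'v \<Rightarrow> real) \<Rightarrow> 'v \<Rightarrow> 'v \<Rightarrow> real" where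
  "vdist V E w u v \<equiv> set_dist V E w {u} {v}"

definition graph_connected :: "'v set \<Rightarrow> ('v \<times> 'v) set \<Rightarrow> bool" where
  "graph_connected V E \<longleftrightarrow> V \<noteq> {} \<and> (\<forall>u\<in>V. \<forall>v\<in>V. walks_between V E {u} {v} \<noteq> {})"

definition induces_connected :: "'v set \<Rightarrow> ('v \<times> 'v) set \<Rightarrow> 'v set \<Rightarrow> bool" where
  "induces_connected V E S \<longleftrightarrow> S \<noteq> {} \<and> S \<subseteq> V \<and>
     (\<forall>u\<in>S. \<forall>v\<in>S. \<exists>P. is_walk V E P \<and> hd P = u \<and> last P = v \<and> set P \<subseteq> S)"

definition normal_family :: "'v set \<Rightarrow> ('v \<times> 'v) set \<Rightarrow> ('v \<Rightarrow> 'v \<Rightarrow> real) \<Rightarrow>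
    ('o \<Rightarrow> 'v set) \<Rightarrow> ('o \<Rightarrow> real) \<Rightarrow> 'o set \<Rightarrow> bool" where
  "normal_family V E w loc rad F \<longleftrightarrow>
     (\<forall>p1\<in>F. \<forall>p2\<in>F. p1 \<noteq> p2 \<longrightarrow> loc p1 \<inter> loc p2 = {} \<and>
        set_dist V E w (loc p1) (loc p2) > rad p1 - rad p2)"

definition voronoi_cell :: "'v set \<Rightarrow> ('v \<times> 'v) set \<Rightarrow> ('v \<Rightarrow> 'v \<Rightarrow> real) \<Rightarrow>
    ('o \<Rightarrow> 'v set) \<Rightarrow> ('o \<Rightarrow> real) \<Rightarrow> 'o set \<Rightarrow> 'o \<Rightarrow> 'v set" where
  "voronoi_cell V E w loc rad F p0 =
     {v\<in>V. \<forall>p\<in>F. set_dist V E w {v} (loc p0) - rad p0 \<le> set_dist V E w {v} (loc p) - rad p}"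

definition shortest_path_to :: "'v set \<Rightarrow> ('v \<times> 'v) set \<Rightarrow> ('v \<Rightarrow> 'v \<Rightarrow> real) \<Rightarrow>
    'v \<Rightarrow> 'v set \<Rightarrow> 'v list \<Rightarrow> bool" where
  "shortest_path_to V E w v X P \<longleftrightarrow>
     P \<in> walks_between V E {v} X \<and> walk_weight w P = set_dist V E w {v} X"

definition generic :: "'v set \<Rightarrow> ('v \<times> 'v) set \<Rightarrow> ('v \<Rightarrow> 'v \<Rightarrow> real) \<Rightarrow>
    ('o \<Rightarrow> real) \<Rightarrow> 'o set \<Rightarrow> bool" where
  "generic V E w rad Obj \<longleftrightarrow>
     (\<forall>u\<in>V. \<forall>v\<in>V. \<forall>u'\<in>V. \<forall>v'\<in>V. u \<noteq> v \<longrightarrow> u' \<noteq> v' \<longrightarrow>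
        vdist V E w u v = vdist V E w u' v' \<longrightarrow> {u, v} = {u', v'}) \<and>
     (\<forall>u\<in>V. \<forall>v\<in>V. \<forall>u'\<in>V. \<forall>v'\<in>V. \<forall>p\<in>Obj. \<forall>p'\<in>Obj. (u \<noteq> v \<or> u' \<noteq> v') \<longrightarrow>
        vdist V E w u v - rad p = vdist V E w u' v' - rad p' \<longrightarrow> {u, v} = {u', v'} \<and> p = p') \<and>
     (\<forall>u\<in>V. \<forall>v\<in>V. \<exists>!P. P \<in> walks_between V E {u} {v} \<and> walk_weight w P = vdist V E w u v)"

end

theory Submission imports Defs begin

text \<open>If y lies on a shortest path from v to loc p, then d(v, loc p) = d(v, y) + d(y, loc p),
  while d(v, loc q) \<le> d(v, y) + d(y, loc q) for every q; so the Voronoi inequalities of v pass to y.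
  Normality places loc p inside its own cell, hence cells are connected through loc p.
  Uniqueness comes from genericity: a shortest path to loc p is the geodesic to its endpoint,
  and distinct vertices have distinct distances from v.\<close>

lemma walk_weight_singleton [simp]: "walk_weight w [x] = 0"
  by (simp add: walk_weight_def)

lemma walk_weight_Cons_Cons [simp]:
  "walk_weight w (x # y # zs) = w x y + walk_weight w (y # zs)"
  unfolding walk_weight_def by (simp del: sum.lessThan_Suc add: sum.lessThan_Suc_shift)

lemma walk_weight_append_tl:
  "P \<noteq> [] \<Longrightarrow> Q \<noteq> [] \<Longrightarrow> last P = hd Q \<Longrightarrow>
   walk_weight w (P @ tl Q) = walk_weight w P + walk_weight w Q"
proof (induct P rule: induct_list012)
  case (2 x)
  then show ?case by (cases Q) auto
qed simp_all

lemma is_walk_singleton [simp]: "is_walk V E [x] \<longleftrightarrow> x \<in> V"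
  by (simp add: is_walk_def)

lemma is_walk_Cons_Cons [simp]:
  "is_walk V E (x # y # zs) \<longleftrightarrow> x \<in> V \<and> (x, y) \<in> E \<and> is_walk V E (y # zs)"
  unfolding is_walk_def by (auto simp: nth_Cons split: nat.splits)

lemma is_walk_append_tl:
  "is_walk V E P \<Longrightarrow> is_walk V E Q \<Longrightarrow> last P = hd Q \<Longrightarrow> is_walk V E (P @ tl Q)"
proof (induct P rule: induct_list012)
  case 1
  then show ?case by (simp add: is_walk_def)
next
  case (2 x)
  then show ?case by (cases Q) auto
qed simp

lemma is_walk_take: "is_walk V E P \<Longrightarrow> i < length P \<Longrightarrow> is_walk V E (take (Suc i) P)"
  unfolding is_walk_def by (auto dest: in_set_takeD)

lemma is_walk_drop: "is_walk V E P \<Longrightarrow> i < length P \<Longrightarrow> is_walk V E (drop i P)"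
  unfolding is_walk_def by (auto dest: in_set_dropD)

lemma walks_between_join:
  assumes "P \<in> walks_between V E X {y}" and "Q \<in> walks_between V E {y} Z"
  shows "P @ tl Q \<in> walks_between V E X Z"
    and "walk_weight w (P @ tl Q) = walk_weight w P + walk_weight w Q"
    and "set (P @ tl Q) \<subseteq> set P \<union> set Q"
proof -
  have ne: "P \<noteq> []" "Q \<noteq> []" and hdQ: "hd Q = last P"
    using assms by (auto simp: walks_between_def is_walk_def)
  have "last (P @ tl Q) = last Q"
    using ne hdQ by (cases Q) (auto simp: last_append)
  then show "P @ tl Q \<in> walks_between V E X Z"
    using assms ne hdQ is_walk_append_tl[of V E P Q] by (simp add: walks_between_def)
  show "walk_weight w (P @ tl Q) = walk_weight w P + walk_weight w Q"
    using ne hdQ by (simp add: walk_weight_append_tl)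
  show "set (P @ tl Q) \<subseteq> set P \<union> set Q"
    by (cases Q) auto
qed

lemma walks_between_split:
  assumes P: "P \<in> walks_between V E X Y" and i: "i < length P"
  shows "take (Suc i) P \<in> walks_between V E X {P ! i}"
    and "drop i P \<in> walks_between V E {P ! i} Y"
    and "walk_weight w P = walk_weight w (take (Suc i) P) + walk_weight w (drop i P)"
proof -
  have wP: "is_walk V E P" "hd P \<in> X" "last P \<in> Y"
    using P by (auto simp: walks_between_def)
  show take: "take (Suc i) P \<in> walks_between V E X {P ! i}"
  proof -
    have "last (take (Suc i) P) = P ! i"
      using i by (simp add: take_Suc_conv_app_nth)
    moreover have "hd (take (Suc i) P) = hd P"
      by (simp add: hd_take)
    ultimately show ?thesis
      using wP is_walk_take[OF wP(1) i] by (simp add: walks_between_def)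
  qed
  show drop: "drop i P \<in> walks_between V E {P ! i} Y"
    using wP i is_walk_drop[OF wP(1) i] by (simp add: walks_between_def hd_drop_conv_nth)
  have "take (Suc i) P @ tl (drop i P) = P"
    by (metis append_take_drop_id drop_Suc tl_drop)
  moreover have "last (take (Suc i) P) = P ! i"
    using i by (simp add: take_Suc_conv_app_nth)
  ultimately show "walk_weight w P = walk_weight w (take (Suc i) P) + walk_weight w (drop i P)"
    using walks_between_join(2)[OF take, of "drop i P" Y w] drop by simp
qed

locale weighted_graph =
  fixes V :: "'v set" and E :: "('v \<times> 'v) set" and w :: "'v \<Rightarrow> 'v \<Rightarrow> real"
  assumes wgraph: "wgraph V E w"
begin

lemma finite_vertices: "finite V"
  using wgraph by (simp add: wgraph_def)

lemma is_walk_rev: "is_walk V E P \<Longrightarrow> is_walk V E (rev P)"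
proof (induct P rule: induct_list012)
  case (3 x y zs)
  have "is_walk V E (rev (y # zs) @ tl [y, x])"
    by (rule is_walk_append_tl) (use 3 wgraph in \<open>auto simp: wgraph_def\<close>)
  then show ?case by simp
qed auto

lemma walk_weight_rev: "is_walk V E P \<Longrightarrow> walk_weight w (rev P) = walk_weight w P"
proof (induct P rule: induct_list012)
  case (3 x y zs)
  have "w y x = w x y"
    using 3 wgraph by (auto simp: wgraph_def)
  moreover have "walk_weight w (rev (y # zs) @ tl [y, x]) = walk_weight w (rev (y # zs)) + w y x"
    by (subst walk_weight_append_tl) auto
  moreover have "walk_weight w (rev (y # zs)) = walk_weight w (y # zs)"
    using 3 by simp
  ultimately show ?case by simp
qed auto

lemma rev_walks_between: "P \<in> walks_between V E X Y \<Longrightarrow> rev P \<in> walks_between V E Y X"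
  using is_walk_rev by (auto simp: walks_between_def hd_rev last_rev is_walk_def)

lemma walk_weights_between_commute:
  "walk_weight w ` walks_between V E X Y = walk_weight w ` walks_between V E Y X"
proof -
  have *: "walk_weight w ` walks_between V E A B \<subseteq> walk_weight w ` walks_between V E B A" for A B
  proof
    fix c assume "c \<in> walk_weight w ` walks_between V E A B"
    then obtain P where P: "P \<in> walks_between V E A B" "c = walk_weight w P" by blast
    then have "c = walk_weight w (rev P)"
      by (simp add: walk_weight_rev walks_between_def)
    with rev_walks_between[OF P(1)] show "c \<in> walk_weight w ` walks_between V E B A" by blast
  qed
  show ?thesis using *[of X Y] *[of Y X] by blast
qed

lemma set_dist_commute: "set_dist V E w X Y = set_dist V E w Y X"
  unfolding set_dist_def walk_weights_between_commute ..

lemma walk_step_weight_pos: "is_walk V E P \<Longrightarrow> Suc i < length P \<Longrightarrow> 0 < w (P ! i) (P ! Suc i)"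
  using wgraph unfolding wgraph_def is_walk_def by blast

lemma walk_weight_nonneg: "is_walk V E P \<Longrightarrow> 0 \<le> walk_weight w P"
  unfolding walk_weight_def by (intro sum_nonneg less_imp_le walk_step_weight_pos) auto

lemma walk_weight_pos:
  assumes P: "is_walk V E P" and "hd P \<noteq> last P"
  shows "0 < walk_weight w P"
proof -
  have "length P \<noteq> 0" "length P \<noteq> 1"
    using assms by (auto simp: is_walk_def length_Suc_conv)
  then show ?thesis
    unfolding walk_weight_def using P
    by (intro sum_pos walk_step_weight_pos) (auto simp: lessThan_empty_iff le_Suc_eq)
qed

lemma set_dist_le_walk_weight:
  "P \<in> walks_between V E X Y \<Longrightarrow> set_dist V E w X Y \<le> walk_weight w P"
  unfolding set_dist_def
  by (rule cInf_lower) (auto intro!: bdd_belowI[of _ 0] walk_weight_nonneg simp: walks_between_def)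

lemma set_dist_greatest:
  "walks_between V E X Y \<noteq> {} \<Longrightarrow> (\<And>P. P \<in> walks_between V E X Y \<Longrightarrow> c \<le> walk_weight w P)
   \<Longrightarrow> c \<le> set_dist V E w X Y"
  unfolding set_dist_def by (rule cInf_greatest) auto

lemma set_dist_antimono:
  assumes "X' \<subseteq> X" "Y' \<subseteq> Y" "walks_between V E X' Y' \<noteq> {}"
  shows "set_dist V E w X Y \<le> set_dist V E w X' Y'"
proof (rule set_dist_greatest[OF assms(3)])
  fix P assume "P \<in> walks_between V E X' Y'"
  then have "P \<in> walks_between V E X Y"
    using assms(1,2) by (auto simp: walks_between_def)
  then show "set_dist V E w X Y \<le> walk_weight w P"
    by (rule set_dist_le_walk_weight)
qed

lemma set_dist_le_zero: "x \<in> X \<Longrightarrow> x \<in> V \<Longrightarrow> set_dist V E w {x} X \<le> 0"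
  using set_dist_le_walk_weight[of "[x]" "{x}" X] by (simp add: walks_between_def)

lemma shortest_path_to_last:
  assumes "shortest_path_to V E w v X P"
  shows "P \<in> walks_between V E {v} {last P}" and "vdist V E w v (last P) = set_dist V E w {v} X"
proof -
  have P: "P \<in> walks_between V E {v} X" "walk_weight w P = set_dist V E w {v} X"
    using assms by (auto simp: shortest_path_to_def)
  then show Pl: "P \<in> walks_between V E {v} {last P}"
    by (simp add: walks_between_def)
  have "set_dist V E w {v} X \<le> vdist V E w v (last P)"
    using P Pl by (intro set_dist_antimono) (auto simp: walks_between_def)
  then show "vdist V E w v (last P) = set_dist V E w {v} X"
    using set_dist_le_walk_weight[OF Pl] P(2) by linarith
qed

end

locale geodesic_graph = weighted_graph +
  assumes unique_geodesic: "u \<in> V \<Longrightarrow> v \<in> V \<Longrightarrow>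
    \<exists>!P. P \<in> walks_between V E {u} {v} \<and> walk_weight w P = vdist V E w u v"
begin

lemma geodesic_exists:
  "u \<in> V \<Longrightarrow> v \<in> V \<Longrightarrow> \<exists>P. P \<in> walks_between V E {u} {v} \<and> walk_weight w P = vdist V E w u v"
  using unique_geodesic by blast

lemma walks_between_nonempty: "u \<in> V \<Longrightarrow> x \<in> X \<Longrightarrow> x \<in> V \<Longrightarrow> walks_between V E {u} X \<noteq> {}"
  using geodesic_exists[of u x] by (auto simp: walks_between_def)

lemma vdist_pos: "u \<in> V \<Longrightarrow> v \<in> V \<Longrightarrow> u \<noteq> v \<Longrightarrow> 0 < vdist V E w u v"
  using geodesic_exists[of u v] walk_weight_pos by (fastforce simp: walks_between_def)

lemma shortest_path_to_exists:
  assumes v: "v \<in> V" and X: "X \<subseteq> V" "X \<noteq> {}"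
  shows "\<exists>P. shortest_path_to V E w v X P"
proof -
  have "finite X"
    using X finite_vertices finite_subset by blast
  then obtain x where x: "x \<in> X" and xmin: "\<And>y. y \<in> X \<Longrightarrow> vdist V E w v x \<le> vdist V E w v y"
    using arg_min_if_finite(1)[OF _ X(2), of "vdist V E w v"]
      arg_min_least[OF _ X(2), of _ "vdist V E w v"] by blast
  obtain P where P: "P \<in> walks_between V E {v} {x}" "walk_weight w P = vdist V E w v x"
    using geodesic_exists[OF v, of x] x X by blast
  have PX: "P \<in> walks_between V E {v} X"
    using P x by (auto simp: walks_between_def)
  have "walk_weight w P \<le> set_dist V E w {v} X"
  proof (rule set_dist_greatest)
    fix Q assume Q: "Q \<in> walks_between V E {v} X"
    then have "vdist V E w v (last Q) \<le> walk_weight w Q"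
      by (intro set_dist_le_walk_weight) (auto simp: walks_between_def)
    then show "walk_weight w P \<le> walk_weight w Q"
      using Q xmin P(2) by (force simp: walks_between_def)
  qed (use PX in blast)
  then show ?thesis
    using PX set_dist_le_walk_weight[OF PX] unfolding shortest_path_to_def by force
qed

lemma set_dist_triangle:
  assumes v: "v \<in> V" and u: "u \<in> V" and X: "X \<subseteq> V" "X \<noteq> {}"
  shows "set_dist V E w {v} X \<le> vdist V E w v u + set_dist V E w {u} X"
proof -
  obtain A where A: "A \<in> walks_between V E {v} {u}" "walk_weight w A = vdist V E w v u"
    using geodesic_exists[OF v u] by blast
  obtain B where "shortest_path_to V E w u X B"
    using shortest_path_to_exists[OF u X] by blast
  then have B: "B \<in> walks_between V E {u} X" "walk_weight w B = set_dist V E w {u} X"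
    by (auto simp: shortest_path_to_def)
  show ?thesis
    using set_dist_le_walk_weight[OF walks_between_join(1)[OF A(1) B(1)]]
      walks_between_join(2)[OF A(1) B(1)] A(2) B(2) by simp
qed

lemma shortest_path_to_split:
  assumes P: "shortest_path_to V E w v X P" and y: "y \<in> set P"
  shows "vdist V E w v y + set_dist V E w {y} X \<le> set_dist V E w {v} X"
proof -
  obtain i where i: "i < length P" and yi: "y = P ! i"
    using y by (metis in_set_conv_nth)
  have PX: "P \<in> walks_between V E {v} X" "walk_weight w P = set_dist V E w {v} X"
    using P by (auto simp: shortest_path_to_def)
  show ?thesis
    unfolding yi using walks_between_split(3)[OF PX(1) i, where w=w] PX(2)
      set_dist_le_walk_weight[OF walks_between_split(1)[OF PX(1) i]]
      set_dist_le_walk_weight[OF walks_between_split(2)[OF PX(1) i]] by linarith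
qed

end

locale generic_graph = geodesic_graph +
  assumes vdist_inj: "\<lbrakk>u \<in> V; v \<in> V; u' \<in> V; v' \<in> V; u \<noteq> v; u' \<noteq> v';
    vdist V E w u v = vdist V E w u' v'\<rbrakk> \<Longrightarrow> {u, v} = {u', v'}"
begin

lemma inj_on_vdist: "v \<in> V \<Longrightarrow> inj_on (vdist V E w v) V"
proof (rule inj_onI)
  fix a b assume v: "v \<in> V" and ab: "a \<in> V" "b \<in> V" "vdist V E w v a = vdist V E w v b"
  have vv: "vdist V E w v v \<le> 0"
    using set_dist_le_zero v by simp
  consider "a = v" | "b = v" | "a \<noteq> v" "b \<noteq> v" by blast
  then show "a = b"
  proof cases
    case 1
    then show ?thesis using vdist_pos[OF v ab(2)] vv ab(3) by force
  next
    case 2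
    then show ?thesis using vdist_pos[OF v ab(1)] vv ab(3) by force
  next
    case 3
    then show ?thesis using vdist_inj[of v a v b] v ab by (auto simp: doubleton_eq_iff)
  qed
qed

lemma ex1_shortest_path_to:
  assumes v: "v \<in> V" and X: "X \<subseteq> V" "X \<noteq> {}"
  shows "\<exists>!P. shortest_path_to V E w v X P"
proof -
  have geodesic_to_last: "walk_weight w P = vdist V E w v (last P)" "last P \<in> V"
    if "shortest_path_to V E w v X P" for P
    using that shortest_path_to_last[OF that] X by (auto simp: shortest_path_to_def walks_between_def)
  have "P = Q" if P: "shortest_path_to V E w v X P" and Q: "shortest_path_to V E w v X Q" for P Q
  proof -
    have "last P = last Q"
      using inj_onD[OF inj_on_vdist[OF v]] geodesic_to_last[OF P] geodesic_to_last[OF Q]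
        shortest_path_to_last(2)[OF P] shortest_path_to_last(2)[OF Q] by simp
    then show ?thesis
      using unique_geodesic[OF v geodesic_to_last(2)[OF Q]] geodesic_to_last[OF P] geodesic_to_last[OF Q]
        shortest_path_to_last(1)[OF P] shortest_path_to_last(1)[OF Q] by metis
  qed
  then show ?thesis
    using shortest_path_to_exists[OF v X] by blast
qed

end

locale voronoi = geodesic_graph +
  fixes loc :: "'o \<Rightarrow> 'v set" and rad :: "'o \<Rightarrow> real" and F :: "'o set"
  assumes normal: "normal_family V E w loc rad F"
    and loc_connected: "p \<in> F \<Longrightarrow> induces_connected V E (loc p)"
begin

lemma loc_subset: "p \<in> F \<Longrightarrow> loc p \<subseteq> V" and loc_nonempty: "p \<in> F \<Longrightarrow> loc p \<noteq> {}"
  using loc_connected by (auto simp: induces_connected_def)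

text \<open>Normality says exactly that a vertex of loc p cannot be closer, in the additively
  weighted sense, to another object of F.\<close>

lemma loc_subset_voronoi_cell:
  assumes p: "p \<in> F"
  shows "loc p \<subseteq> voronoi_cell V E w loc rad F p"
proof
  fix x assume x: "x \<in> loc p"
  have xV: "x \<in> V"
    using x loc_subset[OF p] by blast
  have "set_dist V E w {x} (loc p) - rad p \<le> set_dist V E w {x} (loc q) - rad q" if q: "q \<in> F" for q
  proof (cases "q = p")
    case False
    obtain y where y: "y \<in> loc q"
      using loc_nonempty[OF q] by blast
    have "rad q - rad p < set_dist V E w (loc q) (loc p)"
      using normal q p False by (simp add: normal_family_def)
    also have "\<dots> = set_dist V E w (loc p) (loc q)"
      by (rule set_dist_commute)
    also have "\<dots> \<le> set_dist V E w {x} (loc q)"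
      using x y loc_subset[OF q] by (intro set_dist_antimono walks_between_nonempty[OF xV]) auto
    finally show ?thesis
      using set_dist_le_zero[OF x xV] by linarith
  qed simp
  then show "x \<in> voronoi_cell V E w loc rad F p"
    unfolding voronoi_cell_def using xV by simp
qed

lemma shortest_path_to_subset_voronoi_cell:
  assumes p: "p \<in> F" and v: "v \<in> voronoi_cell V E w loc rad F p"
    and P: "shortest_path_to V E w v (loc p) P"
  shows "set P \<subseteq> voronoi_cell V E w loc rad F p"
proof
  fix y assume y: "y \<in> set P"
  have vV: "v \<in> V"
    using v by (simp add: voronoi_cell_def)
  have yV: "y \<in> V"
    using P y by (auto simp: shortest_path_to_def walks_between_def is_walk_def)
  have "set_dist V E w {y} (loc p) - rad p \<le> set_dist V E w {y} (loc q) - rad q" if q: "q \<in> F" for q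
  proof -
    have "set_dist V E w {v} (loc p) - rad p \<le> set_dist V E w {v} (loc q) - rad q"
      using v q by (simp add: voronoi_cell_def)
    moreover have "set_dist V E w {v} (loc q) \<le> vdist V E w v y + set_dist V E w {y} (loc q)"
      using set_dist_triangle[OF vV yV loc_subset[OF q] loc_nonempty[OF q]] .
    ultimately show ?thesis
      using shortest_path_to_split[OF P y] by linarith
  qed
  then show "y \<in> voronoi_cell V E w loc rad F p"
    unfolding voronoi_cell_def using yV by simp
qed

lemma voronoi_cell_connected:
  assumes p: "p \<in> F"
  shows "induces_connected V E (voronoi_cell V E w loc rad F p)"
  unfolding induces_connected_def
proof (intro conjI ballI)
  let ?M = "voronoi_cell V E w loc rad F p"
  show "?M \<noteq> {}"
    using loc_subset_voronoi_cell[OF p] loc_nonempty[OF p] by blast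
  show MV: "?M \<subseteq> V"
    by (auto simp: voronoi_cell_def)
  have to_loc: "\<exists>P. P \<in> walks_between V E {u} {last P} \<and> last P \<in> loc p \<and> set P \<subseteq> ?M"
    if u: "u \<in> ?M" for u
  proof -
    obtain P where "shortest_path_to V E w u (loc p) P"
      using shortest_path_to_exists u MV loc_subset[OF p] loc_nonempty[OF p] by blast
    then show ?thesis
      using shortest_path_to_subset_voronoi_cell[OF p u]
      by (auto simp: shortest_path_to_def walks_between_def)
  qed
  fix u v assume u: "u \<in> ?M" and v: "v \<in> ?M"
  obtain Pu where Pu: "Pu \<in> walks_between V E {u} {last Pu}" "last Pu \<in> loc p" "set Pu \<subseteq> ?M"
    using to_loc[OF u] by blast
  obtain Pv where Pv: "Pv \<in> walks_between V E {v} {last Pv}" "last Pv \<in> loc p" "set Pv \<subseteq> ?M"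
    using to_loc[OF v] by blast
  obtain C where "is_walk V E C" "hd C = last Pu" "last C = last Pv" and CL: "set C \<subseteq> loc p"
    using loc_connected[OF p] Pu(2) Pv(2) unfolding induces_connected_def by blast
  then have C: "C \<in> walks_between V E {last Pu} {last Pv}"
    by (simp add: walks_between_def)
  have CM: "set C \<subseteq> ?M"
    using CL loc_subset_voronoi_cell[OF p] by (rule subset_trans)
  have J1: "Pu @ tl C \<in> walks_between V E {u} {last Pv}" "set (Pu @ tl C) \<subseteq> ?M"
    using walks_between_join(1,3)[OF Pu(1) C] Pu(3) CM by auto
  have J: "(Pu @ tl C) @ tl (rev Pv) \<in> walks_between V E {u} {v}"
      "set ((Pu @ tl C) @ tl (rev Pv)) \<subseteq> ?M"
    using walks_between_join(1,3)[OF J1(1) rev_walks_between[OF Pv(1)]] J1(2) Pv(3) by auto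
  then show "\<exists>P. is_walk V E P \<and> hd P = u \<and> last P = v \<and> set P \<subseteq> ?M"
    unfolding walks_between_def by blast
qed

end

lemma generic_graph_if_generic:
  assumes "wgraph V E w" and "generic V E w rad Obj"
  shows "generic_graph V E w"
proof -
  from assms(2) have inj: "\<forall>u\<in>V. \<forall>v\<in>V. \<forall>u'\<in>V. \<forall>v'\<in>V. u \<noteq> v \<longrightarrow> u' \<noteq> v' \<longrightarrow>
        vdist V E w u v = vdist V E w u' v' \<longrightarrow> {u, v} = {u', v'}"
    unfolding generic_def by (rule conjunct1)
  from assms(2) have geo: "\<forall>u\<in>V. \<forall>v\<in>V.
      \<exists>!P. P \<in> walks_between V E {u} {v} \<and> walk_weight w P = vdist V E w u v"
    unfolding generic_def by (rule conjunct2[THEN conjunct2])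
  show ?thesis
  proof unfold_locales
    show "wgraph V E w" by (fact assms(1))
    show "\<exists>!P. P \<in> walks_between V E {u} {v} \<and> walk_weight w P = vdist V E w u v"
      if "u \<in> V" "v \<in> V" for u v
      using geo that by blast
    show "{u, v} = {u', v'}"
      if "u \<in> V" "v \<in> V" "u' \<in> V" "v' \<in> V" "u \<noteq> v" "u' \<noteq> v'"
        "vdist V E w u v = vdist V E w u' v'" for u v u' v'
      using inj that by blast
  qed
qed

theorem lemma4p2:
  fixes V :: "'v set" and E :: "('v \<times> 'v) set" and w :: "'v \<Rightarrow> 'v \<Rightarrow> real"
    and loc :: "'o \<Rightarrow> 'v set" and rad :: "'o \<Rightarrow> real" and Obj F :: "'o set"
  assumes "wgraph V E w" and "graph_connected V E"
    and "\<And>p. p \<in> Obj \<Longrightarrow> induces_connected V E (loc p) \<and> rad p \<ge> 0"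
    and "generic V E w rad Obj"
    and "F \<subseteq> Obj" and "normal_family V E w loc rad F"
  shows "\<forall>p\<in>F. (\<forall>v\<in>voronoi_cell V E w loc rad F p.
             (\<exists>!P. shortest_path_to V E w v (loc p) P) \<and>
             (\<forall>P. shortest_path_to V E w v (loc p) P \<longrightarrow> set P \<subseteq> voronoi_cell V E w loc rad F p))
          \<and> induces_connected V E (voronoi_cell V E w loc rad F p)"
proof -
  interpret generic_graph V E w
    using generic_graph_if_generic[OF assms(1,4)] .
  interpret voronoi V E w loc rad F
    by unfold_locales (use assms(3,5,6) in blast)+
  have "\<exists>!P. shortest_path_to V E w v (loc p) P"
    if "p \<in> F" "v \<in> voronoi_cell V E w loc rad F p" for p v
    using that ex1_shortest_path_to[of v "loc p"] loc_subset loc_nonempty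
    by (simp add: voronoi_cell_def)
  then show ?thesis
    using shortest_path_to_subset_voronoi_cell voronoi_cell_connected by blast
qed

end
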